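(* Let $A$ be a commutative ring, let $a_1,\ldots,a_n\in A$, let $u\in A^\times$, $b\in A$, and let $\beta:=h(u)y(ub)\in C(A)$. Then there exist unique $b_1,\ldots,b_n\in A$ satisfying \[\epsilon(b_i)\cdots\epsilon(b_1)=h(u)^{(-1)^{i-1}}\epsilon(a_i)\cdots\epsilon(a_1)\beta\quad\text{in }C(A)\text{ for all }1\le i\le n.\] Furthermore, $b_1=a_1u^2+bu$ and $b_i=u^{2(-1)^{i-1}}a_i$ for all $i\ge2$.
   Context: $C(A)$ is the group with generators $\epsilon(a)$, $a\in A$, and relations: with $h(u):=\epsilon(-u)\epsilon(-u^{-1})\epsilon(-u)$ for $u\in A^\times$, (1) $h(u)h(v)=h(uv)$; (2) $\epsilon(a)\epsilon(0)\epsilon(b)=h(-1)\epsilon(a+b)$; (3) $h(u)\epsilon(a)h(u)=\epsilon(u^2a)$. For $a\in A$, $y(a):=\epsilon(0)^3\epsilon(a)$. *)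

theory Defs
  imports Main
begin

text \<open>The group C(A) is presented by generators eps(a), a in A, and relations.
 We model it by words over generators and their inverses: a letter (a, True)
 stands for eps(a), a letter (a, False) for eps(a)^-1; the group product is
 concatenation, and equality in C(A) is the congruence ceq generated by free
 cancellation and the defining relations (1)-(3).\<close>

type_synonym 'a cword = "('a \<times> bool) list"

definition gen :: "'a \<Rightarrow> 'a cword" where
  "gen a = [(a, True)]"

definition winv :: "'a cword \<Rightarrow> 'a cword" where
  "winv w = rev (map (\<lambda>(a, s). (a, \<not> s)) w)"

definition uinv :: "'a::comm_ring_1 \<Rightarrow> 'a" where
  "uinv u = (SOME v. u * v = 1)"

definition hw :: "'a::comm_ring_1 \<Rightarrow> 'a cword" where
  "hw u = gen (- u) @ gen (- uinv u) @ gen (- u)"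

definition yw :: "'a::comm_ring_1 \<Rightarrow> 'a cword" where
  "yw a = gen 0 @ gen 0 @ gen 0 @ gen a"

inductive ceq :: "'a::comm_ring_1 cword \<Rightarrow> 'a cword \<Rightarrow> bool" where
  refl: "ceq w w"
| sym: "ceq v w \<Longrightarrow> ceq w v"
| trans: "ceq u v \<Longrightarrow> ceq v w \<Longrightarrow> ceq u w"
| cong: "ceq v w \<Longrightarrow> ceq (p @ v @ q) (p @ w @ q)"
| cancel: "ceq [(a, s), (a, \<not> s)] []"
| rel1: "u dvd 1 \<Longrightarrow> v dvd 1 \<Longrightarrow> ceq (hw u @ hw v) (hw (u * v))"
| rel2: "ceq (gen a @ gen 0 @ gen b) (hw (-1) @ gen (a + b))"
| rel3: "u dvd 1 \<Longrightarrow> ceq (hw u @ gen a @ hw u) (gen (u\<^sup>2 * a))"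

definition eprod :: "'a list \<Rightarrow> nat \<Rightarrow> 'a cword" where
  "eprod xs i = concat (rev (map gen (take i xs)))"

definition hpow :: "'a::comm_ring_1 \<Rightarrow> nat \<Rightarrow> 'a cword" where
  "hpow u i = (if odd i then hw u else winv (hw u))"

end

theory Submission
  imports Defs
begin

text \<open>Conjugation by h(u) multiplies the argument of eps by u^2 (relation (3)),
  and eps(a) y(c) = eps(a + c) follows from relation (2) applied twice and
  h(-1)^2 = 1. Hence h(u) eps(a_1) beta = eps(u^2 a_1 + u b), and every further
  eps(a_i) is moved to the left past the current power of h(u), picking up the
  factor u^2 or u^-2. For uniqueness, eps(a) \<mapsto> [[a, 1], [-1, 0]] respects the
  relations, so C(A) acts on A^2, and there eps(a) determines a; thus b_i is
  determined by eps(b_i) ... eps(b_1) once b_1, ..., b_(i-1) are.\<close>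

lemma uinv_mult:
  assumes "(u::'a::comm_ring_1) dvd 1"
  shows "u * uinv u = 1"
proof -
  from assms obtain v where "u * v = 1"
    by (metis dvdE)
  then show ?thesis
    unfolding uinv_def by (rule someI)
qed

lemma uinv_unique:
  assumes "(u::'a::comm_ring_1) * x = 1"
  shows "uinv u = x"
proof -
  have "u * uinv u = 1"
    using assms by (metis dvdI uinv_mult)
  then have "x * (u * uinv u) = x"
    by simp
  with assms show ?thesis
    by (simp add: mult.assoc[symmetric] mult.commute)
qed

lemma uinv_minus_one: "uinv (-1::'a::comm_ring_1) = -1"
  by (rule uinv_unique) simp

lemma uinv_mult_distrib:
  "(u::'a::comm_ring_1) dvd 1 \<Longrightarrow> v dvd 1 \<Longrightarrow> uinv (u * v) = uinv u * uinv v"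
proof (rule uinv_unique)
  assume "u dvd 1" "v dvd 1"
  have "u * v * (uinv u * uinv v) = (u * uinv u) * (v * uinv v)"
    by (simp only: ac_simps)
  with \<open>u dvd 1\<close> \<open>v dvd 1\<close> show "u * v * (uinv u * uinv v) = 1"
    by (simp add: uinv_mult)
qed

declare ceq.trans [trans]

lemma ceq_append: "ceq v w \<Longrightarrow> ceq v' w' \<Longrightarrow> ceq (v @ v') (w @ w')"
  by (metis ceq.cong ceq.trans append.left_neutral append_Nil2)

lemma winv_Cons: "winv (l # w) = winv w @ [(fst l, \<not> snd l)]"
  by (cases l) (simp add: winv_def)

lemma winv_winv [simp]: "winv (winv w) = w"
  unfolding winv_def by (induction w) auto

lemma ceq_append_winv: "ceq (w @ winv w) []"
proof (induction w)
  case Nil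
  show ?case by (simp add: winv_def ceq.refl)
next
  case (Cons l w)
  obtain a s where l: "l = (a, s)" by (cases l)
  have "ceq ([l] @ (w @ winv w) @ [(a, \<not> s)]) ([l] @ [] @ [(a, \<not> s)])"
    using Cons ceq.cong by blast
  also have "ceq ([l] @ [] @ [(a, \<not> s)]) []"
    using ceq.cancel l by simp
  finally show ?case
    using l by (simp add: winv_Cons)
qed

lemma ceq_winv_append: "ceq (winv w @ w) []"
  using ceq_append_winv[of "winv w"] by simp

lemma ceq_move_left:
  assumes "ceq (x @ y) z"
  shows "ceq y (winv x @ z)"
proof -
  have "ceq ([] @ y) ((winv x @ x) @ y)"
    using ceq_append[OF ceq.sym[OF ceq_winv_append[of x]] ceq.refl[of y]] .
  also have "ceq \<dots> (winv x @ z)"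
    using ceq_append[OF ceq.refl[of "winv x"] assms] by simp
  finally show ?thesis by simp
qed

lemma ceq_move_right:
  assumes "ceq (x @ y) z"
  shows "ceq x (z @ winv y)"
proof -
  have "ceq (x @ []) (x @ y @ winv y)"
    using ceq_append[OF ceq.refl[of x] ceq.sym[OF ceq_append_winv[of y]]] .
  also have "ceq \<dots> (z @ winv y)"
    using ceq_append[OF assms ceq.refl[of "winv y"]] by simp
  finally show ?thesis by simp
qed

lemma ceq_idempotent: "ceq (x @ x) x \<Longrightarrow> ceq x []"
  by (meson ceq_move_right ceq_append_winv ceq.trans)

lemma ceq_hw_one: "ceq (hw (1::'a::comm_ring_1)) []"
  using ceq.rel1[of "1::'a" 1] by (simp add: ceq_idempotent)

lemma ceq_hw_minus_one_squared: "ceq (hw (-1::'a::comm_ring_1) @ hw (-1)) []"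
  using ceq.rel1[of "-1::'a" "-1"] ceq_hw_one ceq.trans by fastforce

lemma ceq_gen_yw: "ceq (gen a @ yw c) (gen (a + c))"
proof -
  have "ceq (gen a @ yw c) (hw (-1) @ gen a @ gen 0 @ gen c)"
    using ceq.cong[OF ceq.rel2[of a 0], of "[]" "gen 0 @ gen c"] by (simp add: yw_def)
  also have "ceq \<dots> (hw (-1) @ hw (-1) @ gen (a + c))"
    using ceq.cong[OF ceq.rel2[of a c], of "hw (-1)" "[]"] by simp
  also have "ceq \<dots> (gen (a + c))"
    using ceq_append[OF ceq_hw_minus_one_squared ceq.refl] by simp
  finally show ?thesis .
qed

lemma ceq_hw_gen_hw_yw:
  assumes "(u::'a::comm_ring_1) dvd 1"
  shows "ceq (hw u @ gen a @ hw u @ yw c) (gen (u\<^sup>2 * a + c))"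
proof -
  have "ceq (hw u @ gen a @ hw u @ yw c) (gen (u\<^sup>2 * a) @ yw c)"
    using ceq.cong[OF ceq.rel3[OF assms], where p = "[]" and q = "yw c"] by simp
  also have "ceq \<dots> (gen (u\<^sup>2 * a + c))"
    by (rule ceq_gen_yw)
  finally show ?thesis .
qed

lemma ceq_gen_hw:
  assumes "(u::'a::comm_ring_1) dvd 1"
  shows "ceq (gen ((uinv u)\<^sup>2 * a) @ hw u) (winv (hw u) @ gen a)"
proof -
  have "u\<^sup>2 * ((uinv u)\<^sup>2 * a) = a"
    by (metis assms mult.assoc mult_1 power_mult_distrib power_one uinv_mult)
  then show ?thesis
    using ceq_move_left ceq.rel3[OF assms, of "(uinv u)\<^sup>2 * a"] by fastforce
qed

lemma ceq_gen_winv_hw: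
  assumes "(u::'a::comm_ring_1) dvd 1"
  shows "ceq (gen (u\<^sup>2 * a) @ winv (hw u)) (hw u @ gen a)"
  using ceq_move_right[of "hw u @ gen a" "hw u"] ceq.rel3[OF assms] ceq.sym by fastforce

lemma ceq_gen_hpow:
  assumes "(u::'a::comm_ring_1) dvd 1"
  shows "ceq (gen ((if odd i then (uinv u)\<^sup>2 else u\<^sup>2) * a) @ hpow u i) (hpow u (Suc i) @ gen a)"
  using ceq_gen_hw[OF assms] ceq_gen_winv_hw[OF assms] by (simp add: hpow_def)

datatype 'a mat2 = Mat2 'a 'a 'a 'a

instantiation mat2 :: (semiring_1) monoid_mult
begin

fun times_mat2 :: "'a mat2 \<Rightarrow> 'a mat2 \<Rightarrow> 'a mat2" where
  "Mat2 a b c d * Mat2 e f g h = Mat2 (a * e + b * g) (a * f + b * h) (c * e + d * g) (c * f + d * h)"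

definition one_mat2 :: "'a mat2" where
  "1 = Mat2 1 0 0 1"

instance
proof
  fix x y z :: "'a mat2"
  show "x * y * z = x * (y * z)"
    by (cases x; cases y; cases z) (simp add: algebra_simps)
  show "1 * x = x" "x * 1 = x"
    by (cases x; simp add: one_mat2_def)+
qed

end

fun letter_mat :: "'a::comm_ring_1 \<times> bool \<Rightarrow> 'a mat2" where
  "letter_mat (a, True) = Mat2 a 1 (-1) 0"
| "letter_mat (a, False) = Mat2 0 (-1) 1 a"

definition word_mat :: "'a::comm_ring_1 cword \<Rightarrow> 'a mat2" where
  "word_mat w = prod_list (map letter_mat w)"

lemma word_mat_append: "word_mat (v @ w) = word_mat v * word_mat w"
  by (simp add: word_mat_def)

lemma word_mat_gen: "word_mat (gen a) = Mat2 a 1 (-1) 0"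
  by (simp add: word_mat_def gen_def)

lemma word_mat_hw: "(u::'a::comm_ring_1) dvd 1 \<Longrightarrow> word_mat (hw u) = Mat2 u 0 0 (uinv u)"
  by (simp add: hw_def word_mat_append word_mat_gen algebra_simps uinv_mult)

lemma word_mat_ceq: "ceq v w \<Longrightarrow> word_mat v = word_mat w"
proof (induction rule: ceq.induct)
  case (cong v w p q)
  then show ?case by (simp add: word_mat_append)
next
  case (cancel a s)
  then show ?case by (cases s) (simp_all add: word_mat_def one_mat2_def)
next
  case (rel1 u v)
  then have "u * v dvd 1" by (metis mult_dvd_mono mult_1)
  with rel1 show ?case
    by (simp add: word_mat_append word_mat_hw uinv_mult_distrib)
next
  case (rel2 a b)
  show ?case
    by (simp add: word_mat_append word_mat_gen word_mat_hw uinv_minus_one algebra_simps)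
next
  case (rel3 u a)
  then show ?case
    by (simp add: word_mat_append word_mat_gen word_mat_hw power2_eq_square
        algebra_simps uinv_mult mult.left_commute[of u])
qed auto

lemma mult_right_cancel_invertible:
  "(x::'m::monoid_mult) * z = y * z \<Longrightarrow> z * z' = 1 \<Longrightarrow> x = y"
  by (metis mult.assoc mult_1_right)

lemma ceq_gen_append_cancel:
  assumes "ceq (gen a @ w) (gen b @ w)"
  shows "a = b"
proof -
  have "word_mat (gen a) * word_mat w = word_mat (gen b) * word_mat w"
    using word_mat_ceq[OF assms] by (simp add: word_mat_append)
  moreover have "word_mat w * word_mat (winv w) = 1"
    using word_mat_ceq[OF ceq_append_winv[of w]] by (simp add: word_mat_append word_mat_def)
  ultimately have "word_mat (gen a) = word_mat (gen b)"
    by (rule mult_right_cancel_invertible)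
  then show ?thesis by (simp add: word_mat_gen)
qed

lemma eprod_Suc: "i < length xs \<Longrightarrow> eprod xs (Suc i) = gen (xs ! i) @ eprod xs i"
  by (simp add: eprod_def take_Suc_conv_app_nth)

lemma eprod_Suc_0: "xs \<noteq> [] \<Longrightarrow> eprod xs (Suc 0) = gen (xs ! 0)"
  using eprod_Suc[of 0 xs] by (simp add: eprod_def)

lemma eq_if_ceq_eprod:
  assumes "length xs = length ys"
    and "\<And>i. 1 \<le> i \<Longrightarrow> i \<le> length xs \<Longrightarrow> ceq (eprod xs i) (eprod ys i)"
  shows "xs = ys"
proof -
  have "take i xs = take i ys" if "i \<le> length xs" for i
    using that
  proof (induction i)
    case 0
    show ?case by simp
  next
    case (Suc i)
    then have "take i xs = take i ys" and i: "i < length xs" "i < length ys"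
      using assms(1) by auto
    moreover from this have "eprod ys i = eprod xs i"
      by (simp add: eprod_def)
    ultimately have "ceq (gen (xs ! i) @ eprod xs i) (gen (ys ! i) @ eprod xs i)"
      using assms(2)[of "Suc i"] Suc.prems by (simp add: eprod_Suc)
    then have "xs ! i = ys ! i"
      by (rule ceq_gen_append_cancel)
    with \<open>take i xs = take i ys\<close> i show ?case
      by (simp add: take_Suc_conv_app_nth)
  qed
  then show ?thesis
    using assms(1) by (metis order_refl take_all)
qed

text \<open>Entry k of conj_coeffs u b as is b_(k+1) of the paper.\<close>

definition conj_coeffs :: "'a::comm_ring_1 \<Rightarrow> 'a \<Rightarrow> 'a list \<Rightarrow> 'a list" where
  "conj_coeffs u b as = map (\<lambda>k. if k = 0 then as ! 0 * u\<^sup>2 + b * u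
      else (if odd k then (uinv u)\<^sup>2 else u\<^sup>2) * as ! k) [0..<length as]"

lemma length_conj_coeffs [simp]: "length (conj_coeffs u b as) = length as"
  by (simp add: conj_coeffs_def)

lemma nth_conj_coeffs:
  "k < length as \<Longrightarrow> conj_coeffs u b as ! k = (if k = 0 then as ! 0 * u\<^sup>2 + b * u
      else (if odd k then (uinv u)\<^sup>2 else u\<^sup>2) * as ! k)"
  by (simp add: conj_coeffs_def)

lemma ceq_eprod_conj_coeffs:
  assumes "(u::'a::comm_ring_1) dvd 1" and "1 \<le> i" and "i \<le> length as"
  shows "ceq (eprod (conj_coeffs u b as) i) (hpow u i @ eprod as i @ hw u @ yw (u * b))"
  using assms(2,3)
proof (induction i rule: nat_induct_at_least)
  case base
  then have "as \<noteq> []" "conj_coeffs u b as \<noteq> []"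
    by (auto simp flip: length_0_conv)
  then have "eprod (conj_coeffs u b as) 1 = gen (as ! 0 * u\<^sup>2 + b * u)"
    and "eprod as 1 = gen (as ! 0)"
    by (simp_all add: eprod_Suc_0 nth_conj_coeffs)
  then show ?case
    using ceq.sym[OF ceq_hw_gen_hw_yw[OF assms(1), of "as ! 0" "u * b"]]
    by (simp add: hpow_def mult.commute)
next
  case (Suc i)
  let ?bs = "conj_coeffs u b as" and ?\<beta> = "hw u @ yw (u * b)"
  have i: "i < length ?bs" "i < length as" "i \<noteq> 0"
    using Suc by auto
  have "ceq (eprod ?bs (Suc i)) (gen (?bs ! i) @ hpow u i @ eprod as i @ ?\<beta>)"
    using ceq_append[OF ceq.refl Suc.IH] Suc.prems i by (simp add: eprod_Suc)
  also have "ceq \<dots> (hpow u (Suc i) @ gen (as ! i) @ eprod as i @ ?\<beta>)"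
    using ceq_append[OF ceq_gen_hpow[OF assms(1), of i "as ! i"] ceq.refl] i
    by (simp add: nth_conj_coeffs)
  finally show ?case
    using i by (simp add: eprod_Suc)
qed

theorem proposition4p6:
  fixes as :: "'a::comm_ring_1 list" and u b :: 'a
  assumes "u dvd 1"
  defines "n \<equiv> length as"
  defines "\<beta> \<equiv> hw u @ yw (u * b)"
  defines "P \<equiv> (\<lambda>bs. length bs = n \<and>
             (\<forall>i. 1 \<le> i \<and> i \<le> n \<longrightarrow> ceq (eprod bs i) (hpow u i @ eprod as i @ \<beta>)))"
  shows "(\<exists>!bs. P bs) \<and>
         (\<forall>bs. P bs \<longrightarrow>
            (1 \<le> n \<longrightarrow> bs ! 0 = (as ! 0) * u\<^sup>2 + b * u) \<and>
            (\<forall>i. 2 \<le> i \<and> i \<le> n \<longrightarrow>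
               bs ! (i - 1) = (if odd i then u\<^sup>2 else (uinv u)\<^sup>2) * as ! (i - 1)))"
proof -
  let ?bs = "conj_coeffs u b as"
  have solution: "P ?bs"
    using ceq_eprod_conj_coeffs[OF assms(1)] by (simp add: P_def n_def \<beta>_def)
  have unique: "bs = ?bs" if "P bs" for bs
  proof (rule eq_if_ceq_eprod)
    show "length bs = length ?bs"
      using that by (simp add: P_def n_def)
    fix i
    assume "1 \<le> i" "i \<le> length bs"
    then show "ceq (eprod bs i) (eprod ?bs i)"
      using that solution unfolding P_def by (meson ceq.sym ceq.trans)
  qed
  have first: "?bs ! 0 = as ! 0 * u\<^sup>2 + b * u" if "1 \<le> n"
    using that by (simp add: nth_conj_coeffs n_def Suc_le_eq)
  have later: "?bs ! (i - 1) = (if odd i then u\<^sup>2 else (uinv u)\<^sup>2) * as ! (i - 1)"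
    if "2 \<le> i" "i \<le> n" for i
    using that by (cases i) (simp_all add: nth_conj_coeffs n_def)
  show ?thesis
    using solution unique first later by blast
qed

end
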